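(* Let $S$ be a semigroup with an idempotent $e$ (i.e. $ee=e$) such that the subsemigroup $eSe=\{exe : x\in S\}$ satisfies either $eSe=Se$ or $eSe=eS$. Then $BS\simeq B(eSe)$.
   Context: For a semigroup $S$, the classifying space $BS$ is the geometric realization of the $\Delta$-set whose $n$-simplices are the $n$-tuples $(x_1,\dots,x_n)\in S^n$, with face maps $d_0(x_1,\dots,x_n)=(x_2,\dots,x_n)$, $d_i(x_1,\dots,x_n)=(x_1,\dots,x_{i-1},x_ix_{i+1},x_{i+2},\dots,x_n)$ for $0<i<n$, and $d_n(x_1,\dots,x_n)=(x_1,\dots,x_{n-1})$. Here $Se=\{xe:x\in S\}$ and $eS=\{ex:x\in S\}$. *)

theory Defs
  imports "HOL-Analysis.Analysis" "HOL-Homology.Homology"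
begin

lemma istopology_quotient:
  "istopology (\<lambda>U. U \<subseteq> f ` topspace T \<and> openin T {x \<in> topspace T. f x \<in> U})"
  unfolding istopology_def
proof (rule conjI; intro allI impI)
  fix S U assume a: "S \<subseteq> f ` topspace T \<and> openin T {x \<in> topspace T. f x \<in> S}"
    "U \<subseteq> f ` topspace T \<and> openin T {x \<in> topspace T. f x \<in> U}"
  have "{x \<in> topspace T. f x \<in> S \<inter> U} =
        {x \<in> topspace T. f x \<in> S} \<inter> {x \<in> topspace T. f x \<in> U}" by blast
  show "S \<inter> U \<subseteq> f ` topspace T \<and> openin T {x \<in> topspace T. f x \<in> S \<inter> U}"
  proof (intro conjI)
    show "S \<inter> U \<subseteq> f ` topspace T" using a by blast
    have "openin T ({x \<in> topspace T. f x \<in> S} \<inter> {x \<in> topspace T. f x \<in> U})"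
      using a by (intro openin_Int) auto
    then show "openin T {x \<in> topspace T. f x \<in> S \<inter> U}"
      by (simp only: \<open>{x \<in> topspace T. f x \<in> S \<inter> U} = _\<close>)
  qed
next
  fix K assume a: "\<forall>S\<in>K. S \<subseteq> f ` topspace T \<and> openin T {x \<in> topspace T. f x \<in> S}"
  have eq: "{x \<in> topspace T. f x \<in> \<Union>K} = \<Union>((\<lambda>S. {x \<in> topspace T. f x \<in> S}) ` K)" by blast
  have op: "openin T (\<Union>((\<lambda>S. {x \<in> topspace T. f x \<in> S}) ` K))"
    using a by (intro openin_Union) auto
  show "\<Union>K \<subseteq> f ` topspace T \<and> openin T {x \<in> topspace T. f x \<in> \<Union>K}"
  proof (intro conjI)
    show "\<Union>K \<subseteq> f ` topspace T" using a by blast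
    show "openin T {x \<in> topspace T. f x \<in> \<Union>K}" unfolding eq by (rule op)
  qed
qed

definition quotient_top :: "'a topology \<Rightarrow> ('a \<Rightarrow> 'b) \<Rightarrow> 'b topology" where
  "quotient_top T f = topology (\<lambda>U. U \<subseteq> f ` topspace T \<and> openin T {x \<in> topspace T. f x \<in> U})"

text \<open>The face d n i corresponds to the coface map of the standard simplex
  that inserts a zero in coordinate i, i.e. simplical_face i.\<close>

definition delta_set :: "(nat \<Rightarrow> 'b set) \<Rightarrow> (nat \<Rightarrow> nat \<Rightarrow> 'b \<Rightarrow> 'b) \<Rightarrow> bool" where
  "delta_set X d \<longleftrightarrow>
     (\<forall>n i x. x \<in> X (Suc n) \<and> i \<le> Suc n \<longrightarrow> d (Suc n) i x \<in> X n) \<and>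
     (\<forall>n i j x. x \<in> X (Suc (Suc n)) \<and> i < j \<and> j \<le> Suc (Suc n) \<longrightarrow>
        d (Suc n) i (d (Suc (Suc n)) j x) = d (Suc n) (j - 1) (d (Suc (Suc n)) i x))"

definition simplices_sum :: "(nat \<Rightarrow> 'b set) \<Rightarrow> ((nat \<times> 'b) \<times> (nat \<Rightarrow> real)) topology" where
  "simplices_sum X = sum_topology (\<lambda>(n, x). subtopology (powertop_real UNIV) (standard_simplex n))
                                  (SIGMA n:UNIV. X n)"

definition realization_rel ::
  "(nat \<Rightarrow> 'b set) \<Rightarrow> (nat \<Rightarrow> nat \<Rightarrow> 'b \<Rightarrow> 'b) \<Rightarrow>
   (((nat \<times> 'b) \<times> (nat \<Rightarrow> real)) \<times> ((nat \<times> 'b) \<times> (nat \<Rightarrow> real))) set" where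
  "realization_rel X d =
     {(((n, d (Suc n) i x), t), ((Suc n, x), simplical_face i t)) | n i x t.
        x \<in> X (Suc n) \<and> i \<le> Suc n \<and> t \<in> standard_simplex n}"

definition realization_class :: "(nat \<Rightarrow> 'b set) \<Rightarrow> (nat \<Rightarrow> nat \<Rightarrow> 'b \<Rightarrow> 'b) \<Rightarrow>
   ((nat \<times> 'b) \<times> (nat \<Rightarrow> real)) \<Rightarrow> ((nat \<times> 'b) \<times> (nat \<Rightarrow> real)) set" where
  "realization_class X d p = ((realization_rel X d \<union> (realization_rel X d)\<inverse>)\<^sup>*) `` {p}"

definition geometric_realization :: "(nat \<Rightarrow> 'b set) \<Rightarrow> (nat \<Rightarrow> nat \<Rightarrow> 'b \<Rightarrow> 'b) \<Rightarrow>
   ((nat \<times> 'b) \<times> (nat \<Rightarrow> real)) set topology" where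
  "geometric_realization X d = quotient_top (simplices_sum X) (realization_class X d)"

definition semigroup_on :: "'a set \<Rightarrow> ('a \<Rightarrow> 'a \<Rightarrow> 'a) \<Rightarrow> bool" where
  "semigroup_on S m \<longleftrightarrow> (\<forall>x\<in>S. \<forall>y\<in>S. m x y \<in> S) \<and>
     (\<forall>x\<in>S. \<forall>y\<in>S. \<forall>z\<in>S. m (m x y) z = m x (m y z))"

definition nerve_simplices :: "'a set \<Rightarrow> nat \<Rightarrow> 'a list set" where
  "nerve_simplices S n = {xs. length xs = n \<and> set xs \<subseteq> S}"

text \<open>Face maps on n-tuples (x_1,...,x_n), i = 0..n (list index k holds x_(k+1)).\<close>
definition nerve_face :: "('a \<Rightarrow> 'a \<Rightarrow> 'a) \<Rightarrow> nat \<Rightarrow> nat \<Rightarrow> 'a list \<Rightarrow> 'a list" where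
  "nerve_face m n i xs =
     (if i = 0 then tl xs
      else if i = n then butlast xs
      else take (i - 1) xs @ [m (xs ! (i - 1)) (xs ! i)] @ drop (i + 1) xs)"

definition classifying_space :: "'a set \<Rightarrow> ('a \<Rightarrow> 'a \<Rightarrow> 'a) \<Rightarrow>
   ((nat \<times> 'a list) \<times> (nat \<Rightarrow> real)) set topology" where
  "classifying_space S m = geometric_realization (nerve_simplices S) (nerve_face m)"

end

theory Submission
  imports Defs
begin

text \<open>If \<open>f\<close>, \<open>g\<close> are endomorphisms of a semigroup \<open>S\<close> and \<open>e \<in> S\<close> intertwines them,
  \<open>f a \<cdot> e = e \<cdot> g a\<close>, then \<open>B f\<close> and \<open>B g\<close> are homotopic: the prism \<open>\<Delta>\<^sup>n \<times> [0,1]\<close> over a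
  simplex \<open>(x\<^sub>1, \<dots>, x\<^sub>n)\<close> is triangulated into \<open>n + 1\<close> copies of \<open>\<Delta>\<^sup>n\<^sup>+\<^sup>1\<close>, and the \<open>k\<close>-th
  copy is sent to the simplex \<open>(f x\<^sub>1, \<dots>, f x\<^sub>k, e, g x\<^sub>k\<^sub>+\<^sub>1, \<dots>, g x\<^sub>n)\<close>. Adjacent copies agree on
  their common face because \<open>f x\<^sub>k\<^sub>+\<^sub>1 \<cdot> e = e \<cdot> g x\<^sub>k\<^sub>+\<^sub>1\<close>, and the faces of the prism are mapped
  compatibly because \<open>f\<close> and \<open>g\<close> are homomorphisms.

  If \<open>eSe = Se\<close>, then \<open>h x = x e\<close> is a homomorphism retracting \<open>S\<close> onto \<open>eSe\<close>, and \<open>e\<close>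
  intertwines the identity with \<open>h\<close>, since \<open>a e = e (a e)\<close>. Hence \<open>B h\<close> is homotopic to the
  identity, and \<open>B h\<close> together with the inclusion \<open>eSe \<subseteq> S\<close> is a homotopy equivalence.
  The case \<open>eSe = eS\<close> is symmetric, with \<open>h x = e x\<close>.\<close>

lemma openin_quotient_top:
  "openin (quotient_top T f) U \<longleftrightarrow> U \<subseteq> f ` topspace T \<and> openin T {x \<in> topspace T. f x \<in> U}"
  unfolding quotient_top_def using istopology_quotient[of f T] by (simp add: topology_inverse')

lemma topspace_quotient_top: "topspace (quotient_top T f) = f ` topspace T"
proof
  show "topspace (quotient_top T f) \<subseteq> f ` topspace T"
    using openin_quotient_top[of T f "topspace (quotient_top T f)"] by auto
  have "{x \<in> topspace T. f x \<in> f ` topspace T} = topspace T"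
    by auto
  then have "openin (quotient_top T f) (f ` topspace T)"
    by (simp add: openin_quotient_top)
  then show "f ` topspace T \<subseteq> topspace (quotient_top T f)"
    by (rule openin_subset)
qed

lemma quotient_map_quotient_top: "quotient_map T (quotient_top T f) f"
  unfolding quotient_map_def by (auto simp: topspace_quotient_top openin_quotient_top)

lemma quotient_map_realization_class:
  "quotient_map (simplices_sum X) (geometric_realization X d) (realization_class X d)"
  unfolding geometric_realization_def by (rule quotient_map_quotient_top)

lemma topspace_geometric_realization:
  "topspace (geometric_realization X d) = realization_class X d ` topspace (simplices_sum X)"
  unfolding geometric_realization_def by (rule topspace_quotient_top)

lemma topspace_simplices_sum:
  "topspace (simplices_sum X) = {((n, x), t). x \<in> X n \<and> t \<in> standard_simplex n}"
  unfolding simplices_sum_def by auto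

lemma realization_class_eq:
  assumes "(a, b) \<in> realization_rel X d"
  shows "realization_class X d a = realization_class X d b"
proof -
  let ?E = "(realization_rel X d \<union> (realization_rel X d)\<inverse>)\<^sup>*"
  have "(a, b) \<in> ?E" "(b, a) \<in> ?E"
    using assms by auto
  then have "(a, x) \<in> ?E \<longleftrightarrow> (b, x) \<in> ?E" for x
    by (meson rtrancl_trans)
  then show ?thesis
    unfolding realization_class_def by auto
qed

lemma realization_class_eq_respects:
  assumes resp: "\<And>a b. (a, b) \<in> realization_rel X d \<Longrightarrow> F a = F b"
    and eq: "realization_class X d p = realization_class X d q"
  shows "F p = F q"
proof -
  have "q \<in> realization_class X d p"
    unfolding eq unfolding realization_class_def by simp
  then have "(p, q) \<in> (realization_rel X d \<union> (realization_rel X d)\<inverse>)\<^sup>*"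
    unfolding realization_class_def by simp
  then show ?thesis
  proof induction
    case (step y z)
    then show ?case
      using resp[of y z] resp[of z y] by auto
  qed simp
qed

lemma geometric_realization_lift_exists:
  assumes "\<And>a b. (a, b) \<in> realization_rel X d \<Longrightarrow> F a = F b"
    and "continuous_map (simplices_sum X) Z F"
  obtains G where "continuous_map (geometric_realization X d) Z G"
    "\<And>p. p \<in> topspace (simplices_sum X) \<Longrightarrow> G (realization_class X d p) = F p"
proof (rule quotient_map_lift_exists[OF quotient_map_realization_class assms(2)])
  show "F p = F q" if "realization_class X d p = realization_class X d q" for p q
    using realization_class_eq_respects[OF assms(1) that] .
qed (use that in blast)

lemma continuous_map_from_sum_topology:
  assumes "\<And>j. j \<in> J \<Longrightarrow> continuous_map (Y j) W (\<lambda>y. h (j, y))"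
  shows "continuous_map (sum_topology Y J) W h"
  unfolding continuous_map_def
proof (intro conjI allI impI)
  show "h \<in> topspace (sum_topology Y J) \<rightarrow> topspace W"
  proof
    fix w assume "w \<in> topspace (sum_topology Y J)"
    then obtain j y where "w = (j, y)" "j \<in> J" "y \<in> topspace (Y j)"
      by auto
    then show "h w \<in> topspace W"
      using continuous_map_image_subset_topspace[OF assms] by auto
  qed
  fix U assume U: "openin W U"
  have "{x. (j, x) \<in> {x \<in> topspace (sum_topology Y J). h x \<in> U}} = {y \<in> topspace (Y j). h (j, y) \<in> U}"
    if "j \<in> J" for j
    using that by auto
  then show "openin (sum_topology Y J) {x \<in> topspace (sum_topology Y J). h x \<in> U}"
    unfolding openin_sum_topology using openin_continuous_map_preimage[OF assms U] by auto
qed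

lemma continuous_map_from_prod_sum_topology:
  assumes "\<And>j. j \<in> J \<Longrightarrow> continuous_map (prod_topology Z (Y j)) W (\<lambda>(z, y). h (z, (j, y)))"
  shows "continuous_map (prod_topology Z (sum_topology Y J)) W h"
  unfolding continuous_map_def
proof (intro conjI allI impI)
  show "h \<in> topspace (prod_topology Z (sum_topology Y J)) \<rightarrow> topspace W"
  proof
    fix w assume "w \<in> topspace (prod_topology Z (sum_topology Y J))"
    then obtain z j y where "w = (z, (j, y))" "j \<in> J" "z \<in> topspace Z" "y \<in> topspace (Y j)"
      by auto
    then show "h w \<in> topspace W"
      using continuous_map_image_subset_topspace[OF assms] by fastforce
  qed
  fix U assume U: "openin W U"
  let ?V = "{x \<in> topspace (prod_topology Z (sum_topology Y J)). h x \<in> U}"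
  show "openin (prod_topology Z (sum_topology Y J)) ?V"
    unfolding openin_prod_topology_alt
  proof (intro allI impI)
    fix z p assume zp: "(z, p) \<in> ?V"
    obtain j y where p: "p = (j, y)" by (cases p)
    have j: "j \<in> J" and zy: "z \<in> topspace Z" "y \<in> topspace (Y j)" and "h (z, (j, y)) \<in> U"
      using zp p by auto
    let ?P = "{x \<in> topspace (prod_topology Z (Y j)). (\<lambda>(z, y). h (z, (j, y))) x \<in> U}"
    have "openin (prod_topology Z (Y j)) ?P" and "(z, y) \<in> ?P"
      using openin_continuous_map_preimage[OF assms[OF j] U] zy \<open>h (z, (j, y)) \<in> U\<close> by auto
    then obtain A B where AB: "openin Z A" "openin (Y j) B" "z \<in> A" "y \<in> B" "A \<times> B \<subseteq> ?P"
      unfolding openin_prod_topology_alt by meson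
    have "openin (sum_topology Y J) (Pair j ` B)"
      using open_map_component_injection[OF j] AB(2) unfolding open_map_def by blast
    moreover have "A \<times> Pair j ` B \<subseteq> ?V"
      using AB(5) j by force
    ultimately show "\<exists>A' B'. openin Z A' \<and> openin (sum_topology Y J) B' \<and> z \<in> A' \<and> p \<in> B' \<and> A' \<times> B' \<subseteq> ?V"
      using AB(1,3,4) p by blast
  qed
qed

lemma closedin_continuous_maps_le:
  fixes a b :: "'a \<Rightarrow> real"
  assumes "continuous_map X euclideanreal a" "continuous_map X euclideanreal b"
  shows "closedin X {x \<in> topspace X. a x \<le> b x}"
proof -
  have "closedin euclideanreal {..0::real}"
    using closed_closedin by blast
  then have "closedin X {x \<in> topspace X. a x - b x \<in> {..0}}"
    using closedin_continuous_map_preimage continuous_map_diff[OF assms] by blast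
  then show ?thesis
    by simp
qed

abbreviation simplex_topology :: "nat \<Rightarrow> (nat \<Rightarrow> real) topology" where
  "simplex_topology n \<equiv> subtopology (powertop_real UNIV) (standard_simplex n)"

lemma continuous_map_simplex_into_simplices_sum:
  assumes "x \<in> X n"
  shows "continuous_map (simplex_topology n) (simplices_sum X) (\<lambda>t. ((n, x), t))"
  using continuous_map_component_injection[of "(n, x)" "SIGMA n:UNIV. X n"
      "\<lambda>(n, x). simplex_topology n"] assms
  unfolding simplices_sum_def by simp

lemma continuous_map_from_simplices_sum:
  assumes "\<And>n x. x \<in> X n \<Longrightarrow>
    continuous_map (simplex_topology n) W (\<lambda>t. h ((n, x), t))"
  shows "continuous_map (simplices_sum X) W h"
  unfolding simplices_sum_def
  by (rule continuous_map_from_sum_topology) (auto intro: assms)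

lemma continuous_map_from_prod_simplices_sum:
  assumes "\<And>n x. x \<in> X n \<Longrightarrow>
    continuous_map (prod_topology Z (simplex_topology n)) W
      (\<lambda>(z, t). h (z, ((n, x), t)))"
  shows "continuous_map (prod_topology Z (simplices_sum X)) W h"
  unfolding simplices_sum_def
  by (rule continuous_map_from_prod_sum_topology) (auto intro: assms)

lemma semigroup_on_closed: "semigroup_on S m \<Longrightarrow> x \<in> S \<Longrightarrow> y \<in> S \<Longrightarrow> m x y \<in> S"
  unfolding semigroup_on_def by blast

lemma semigroup_on_assoc:
  "semigroup_on S m \<Longrightarrow> x \<in> S \<Longrightarrow> y \<in> S \<Longrightarrow> z \<in> S \<Longrightarrow> m (m x y) z = m x (m y z)"
  unfolding semigroup_on_def by blast

definition hom_on :: "'a set \<Rightarrow> ('a \<Rightarrow> 'a \<Rightarrow> 'a) \<Rightarrow> ('a \<Rightarrow> 'a) \<Rightarrow> bool" where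
  "hom_on S m h \<longleftrightarrow> (\<forall>x\<in>S. \<forall>y\<in>S. h (m x y) = m (h x) (h y))"

lemma hom_on_id [simp]: "hom_on S m id"
  by (simp add: hom_on_def)

lemma nerve_simplices_iff: "xs \<in> nerve_simplices S n \<longleftrightarrow> length xs = n \<and> set xs \<subseteq> S"
  by (simp add: nerve_simplices_def)

lemma map_in_nerve_simplices:
  "(\<And>x. x \<in> S \<Longrightarrow> h x \<in> T) \<Longrightarrow> xs \<in> nerve_simplices S n \<Longrightarrow> map h xs \<in> nerve_simplices T n"
  by (auto simp: nerve_simplices_iff)

lemma nerve_face_inner:
  "0 < i \<Longrightarrow> i < n \<Longrightarrow> nerve_face m n i xs = take (i - 1) xs @ [m (xs ! (i - 1)) (xs ! i)] @ drop (i + 1) xs"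
  by (simp add: nerve_face_def)

lemma length_nerve_face: "length xs = n \<Longrightarrow> 0 < n \<Longrightarrow> i \<le> n \<Longrightarrow> length (nerve_face m n i xs) = n - 1"
  by (auto simp: nerve_face_def)

lemma nerve_face_in_nerve_simplices:
  assumes S: "semigroup_on S m" and xs: "xs \<in> nerve_simplices S (Suc n)" and i: "i \<le> Suc n"
  shows "nerve_face m (Suc n) i xs \<in> nerve_simplices S n"
proof -
  have len: "length xs = Suc n" and sub: "set xs \<subseteq> S"
    using xs by (auto simp: nerve_simplices_iff)
  consider "i = 0" | "i = Suc n" | "0 < i" "i < Suc n"
    using i by linarith
  then have "set (nerve_face m (Suc n) i xs) \<subseteq> S"
  proof cases
    case 1
    then show ?thesis using sub by (cases xs) (auto simp: nerve_face_def)
  next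
    case 2
    then show ?thesis using sub by (auto simp: nerve_face_def dest: in_set_butlastD)
  next
    case 3
    have "xs ! (i - 1) \<in> S" "xs ! i \<in> S"
      using 3 len sub by (auto dest!: nth_mem)
    then show ?thesis
      using 3 sub semigroup_on_closed[OF S] by (auto simp: nerve_face_inner dest: in_set_takeD in_set_dropD)
  qed
  then show ?thesis
    using len i by (simp add: nerve_simplices_iff length_nerve_face)
qed

lemma map_nerve_face:
  assumes h: "hom_on S m h" and xs: "xs \<in> nerve_simplices S (Suc n)" and i: "i \<le> Suc n"
  shows "map h (nerve_face m (Suc n) i xs) = nerve_face m (Suc n) i (map h xs)"
proof -
  consider "i = 0" | "i = Suc n" | "0 < i" "i < Suc n"
    using i by linarith
  then show ?thesis
  proof cases
    case 3
    have "xs ! (i - 1) \<in> S" "xs ! i \<in> S"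
      using 3 xs by (auto simp: nerve_simplices_iff dest!: nth_mem)
    then have "h (m (xs ! (i - 1)) (xs ! i)) = m (map h xs ! (i - 1)) (map h xs ! i)"
      using h 3 xs by (simp add: hom_on_def nerve_simplices_iff)
    then show ?thesis
      using 3 by (simp add: nerve_face_inner take_map drop_map)
  qed (simp_all add: nerve_face_def map_tl map_butlast)
qed

abbreviation nerve_class ::
  "'a set \<Rightarrow> ('a \<Rightarrow> 'a \<Rightarrow> 'a) \<Rightarrow> (nat \<times> 'a list) \<times> (nat \<Rightarrow> real) \<Rightarrow> _" where
  "nerve_class S m \<equiv> realization_class (nerve_simplices S) (nerve_face m)"

lemma topspace_classifying_space:
  "topspace (classifying_space S m) = nerve_class S m ` topspace (simplices_sum (nerve_simplices S))"
  unfolding classifying_space_def by (rule topspace_geometric_realization)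

lemma nerve_class_face:
  assumes "xs \<in> nerve_simplices S (Suc n)" "i \<le> Suc n" "t \<in> standard_simplex n"
  shows "nerve_class S m ((n, nerve_face m (Suc n) i xs), t) = nerve_class S m ((Suc n, xs), simplical_face i t)"
  by (rule realization_class_eq) (use assms in \<open>auto simp: realization_rel_def\<close>)

lemma continuous_map_nerve_class_simplex:
  assumes "xs \<in> nerve_simplices S n"
  shows "continuous_map (simplex_topology n) (classifying_space S m) (\<lambda>t. nerve_class S m ((n, xs), t))"
  using continuous_map_compose[OF continuous_map_simplex_into_simplices_sum[of xs "nerve_simplices S", OF assms]
      quotient_imp_continuous_map[OF quotient_map_realization_class]]
  unfolding classifying_space_def by (simp add: o_def)

lemma classifying_space_map_exists:
  assumes h: "hom_on S m h" and hT: "\<And>x. x \<in> S \<Longrightarrow> h x \<in> T"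
  obtains F where "continuous_map (classifying_space S m) (classifying_space T m) F"
    "\<And>n xs t. xs \<in> nerve_simplices S n \<Longrightarrow> t \<in> standard_simplex n \<Longrightarrow>
       F (nerve_class S m ((n, xs), t)) = nerve_class T m ((n, map h xs), t)"
proof -
  let ?F = "\<lambda>((n, xs), t). nerve_class T m ((n, map h xs), t)"
  have resp: "?F a = ?F b" if ab_rel: "(a, b) \<in> realization_rel (nerve_simplices S) (nerve_face m)" for a b
  proof -
    obtain n i xs t where ab: "a = ((n, nerve_face m (Suc n) i xs), t)" "b = ((Suc n, xs), simplical_face i t)"
      and xs: "xs \<in> nerve_simplices S (Suc n)" and i: "i \<le> Suc n" and t: "t \<in> standard_simplex n"
      using ab_rel unfolding realization_rel_def by blast
    show ?thesis
      using nerve_class_face[where m = m, OF map_in_nerve_simplices[of S h T, OF hT xs] i t]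
      by (simp add: ab map_nerve_face[OF h xs i])
  qed
  have cont: "continuous_map (simplices_sum (nerve_simplices S)) (classifying_space T m) ?F"
  proof (rule continuous_map_from_simplices_sum)
    fix n xs assume "xs \<in> nerve_simplices S n"
    then have "map h xs \<in> nerve_simplices T n"
      using map_in_nerve_simplices[of S h T] hT by blast
    then show "continuous_map (simplex_topology n) (classifying_space T m)
      (\<lambda>t. ?F ((n, xs), t))"
      by (simp add: continuous_map_nerve_class_simplex)
  qed
  obtain F where "continuous_map (classifying_space S m) (classifying_space T m) F"
    "\<And>p. p \<in> topspace (simplices_sum (nerve_simplices S)) \<Longrightarrow> F (nerve_class S m p) = ?F p"
    using geometric_realization_lift_exists[OF resp cont] unfolding classifying_space_def by blast
  then show ?thesis
    using that by (simp add: topspace_simplices_sum)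
qed

section \<open>Triangulating the prism over a simplex\<close>

definition partial_sum :: "(nat \<Rightarrow> real) \<Rightarrow> nat \<Rightarrow> real" where
  "partial_sum t j = (\<Sum>l<j. t l)"

definition prism_cell :: "(nat \<Rightarrow> real) \<Rightarrow> real \<Rightarrow> nat \<Rightarrow> bool" where
  "prism_cell t c k \<longleftrightarrow> partial_sum t k \<le> c \<and> c \<le> partial_sum t (Suc k)"

text \<open>On the cell \<open>prism_cell t c k\<close> of the prism \<open>\<Delta>\<^sup>n \<times> [0,1]\<close>, the partial sums of
  \<open>prism_coords t c\<close> are those of \<open>t\<close> with \<open>c\<close> inserted after \<open>partial_sum t k\<close>;
  this identifies the cell with \<open>\<Delta>\<^sup>n\<^sup>+\<^sup>1\<close>.\<close>

definition prism_cumul :: "(nat \<Rightarrow> real) \<Rightarrow> real \<Rightarrow> nat \<Rightarrow> real" where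
  "prism_cumul t c j = max (partial_sum t (j - 1)) (min (partial_sum t j) c)"

definition prism_coords :: "(nat \<Rightarrow> real) \<Rightarrow> real \<Rightarrow> nat \<Rightarrow> real" where
  "prism_coords t c j = prism_cumul t c (Suc j) - prism_cumul t c j"

lemma partial_sum_0 [simp]: "partial_sum t 0 = 0"
  by (simp add: partial_sum_def)

lemma partial_sum_Suc: "partial_sum t (Suc j) = partial_sum t j + t j"
  by (simp add: partial_sum_def)

lemma standard_simplex_nonneg: "t \<in> standard_simplex n \<Longrightarrow> 0 \<le> t l"
  by (simp add: standard_simplex_def)

lemma partial_sum_mono: "(\<And>l. 0 \<le> t l) \<Longrightarrow> a \<le> b \<Longrightarrow> partial_sum t a \<le> partial_sum t b"
  unfolding partial_sum_def by (intro sum_mono2) auto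

lemma partial_sum_nonneg: "(\<And>l. 0 \<le> t l) \<Longrightarrow> 0 \<le> partial_sum t a"
  unfolding partial_sum_def by (intro sum_nonneg) auto

lemma partial_sum_standard_simplex:
  assumes t: "t \<in> standard_simplex n" and "Suc n \<le> j"
  shows "partial_sum t j = 1"
  using assms(2)
proof (induction j rule: dec_induct)
  case base
  then show ?case
    using t by (simp add: standard_simplex_def partial_sum_def lessThan_Suc_atMost)
next
  case (step j)
  then show ?case
    using t by (simp add: partial_sum_Suc standard_simplex_def)
qed

lemma partial_sum_le_one:
  assumes t: "t \<in> standard_simplex n"
  shows "partial_sum t j \<le> 1"
proof (cases "j \<le> Suc n")
  case True
  then have "partial_sum t j \<le> partial_sum t (Suc n)"
    by (intro partial_sum_mono standard_simplex_nonneg[OF t])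
  then show ?thesis
    using partial_sum_standard_simplex[OF t] by simp
next
  case False
  then show ?thesis
    using partial_sum_standard_simplex[OF t, of j] by simp
qed

lemma prism_cell_exists:
  assumes t: "t \<in> standard_simplex n" and c: "0 \<le> c" "c \<le> 1"
  shows "\<exists>k\<le>n. prism_cell t c k"
proof -
  have "c \<le> partial_sum t (Suc j) \<Longrightarrow> \<exists>k\<le>j. prism_cell t c k" for j
  proof (induction j)
    case 0
    then show ?case
      using c by (auto simp: prism_cell_def)
  next
    case (Suc j)
    then show ?case
      by (cases "c \<le> partial_sum t (Suc j)") (auto simp: prism_cell_def intro: le_SucI)
  qed
  then show ?thesis
    using c partial_sum_standard_simplex[OF t] by simp
qed

lemma prism_cumul_le_Suc: "(\<And>l. 0 \<le> t l) \<Longrightarrow> prism_cumul t c j \<le> prism_cumul t c (Suc j)"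
  using partial_sum_mono[of t "j - 1" j] by (auto simp: prism_cumul_def)

lemma prism_cumul_nonneg: "(\<And>l. 0 \<le> t l) \<Longrightarrow> 0 \<le> prism_cumul t c j"
  using partial_sum_nonneg[of t "j - 1"] by (simp add: prism_cumul_def)

lemma prism_cumul_le_one: "t \<in> standard_simplex n \<Longrightarrow> c \<le> 1 \<Longrightarrow> prism_cumul t c j \<le> 1"
  using partial_sum_le_one[of t n "j - 1"] partial_sum_le_one[of t n j] by (simp add: prism_cumul_def)

lemma prism_cumul_eq_one:
  "t \<in> standard_simplex n \<Longrightarrow> c \<le> 1 \<Longrightarrow> Suc (Suc n) \<le> j \<Longrightarrow> prism_cumul t c j = 1"
  using partial_sum_standard_simplex[of t n "j - 1"] partial_sum_standard_simplex[of t n j]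
  by (simp add: prism_cumul_def)

lemma prism_coords_in_standard_simplex:
  assumes t: "t \<in> standard_simplex n" and c: "0 \<le> c" "c \<le> 1"
  shows "prism_coords t c \<in> standard_simplex (Suc n)"
proof -
  have nonneg: "\<And>l. 0 \<le> t l"
    using standard_simplex_nonneg[OF t] .
  have "(\<Sum>j\<le>Suc n. prism_coords t c j) = prism_cumul t c (Suc (Suc n)) - prism_cumul t c 0"
    unfolding prism_coords_def lessThan_Suc_atMost[symmetric] by (rule sum_lessThan_telescope)
  also have "\<dots> = 1"
    using prism_cumul_eq_one[OF t c(2), of "Suc (Suc n)"] c(1) by (simp add: prism_cumul_def)
  finally have "(\<Sum>j\<le>Suc n. prism_coords t c j) = 1" .
  moreover have "0 \<le> prism_coords t c j" "prism_coords t c j \<le> 1" for j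
    using prism_cumul_le_Suc[of t c j, OF nonneg] prism_cumul_nonneg[of t c j, OF nonneg]
      prism_cumul_le_one[OF t c(2), of "Suc j"]
    by (simp_all add: prism_coords_def)
  moreover have "prism_coords t c j = 0" if "Suc n < j" for j
    using prism_cumul_eq_one[OF t c(2), of j] prism_cumul_eq_one[OF t c(2), of "Suc j"] that
    by (simp add: prism_coords_def)
  ultimately show ?thesis
    by (simp add: standard_simplex_def)
qed

lemma differences_simplical_face:
  fixes A B :: "nat \<Rightarrow> real"
  assumes "\<And>j. A j = (if j \<le> a then B j else B (j - 1))"
  shows "(\<lambda>j. A (Suc j) - A j) = simplical_face a (\<lambda>j. B (Suc j) - B j)"
proof
  fix j
  show "A (Suc j) - A j = simplical_face a (\<lambda>j. B (Suc j) - B j) j"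
    using assms[of j] assms[of "Suc j"] by (cases j a rule: linorder_cases) (auto simp: simplical_face_def)
qed

lemma prism_coords_eq_face:
  assumes "\<And>j. prism_cumul t c j = (if j \<le> a then partial_sum t j else partial_sum t (j - 1))"
  shows "prism_coords t c = simplical_face a t"
proof -
  have "prism_coords t c = simplical_face a (\<lambda>j. partial_sum t (Suc j) - partial_sum t j)"
    unfolding prism_coords_def[abs_def] by (rule differences_simplical_face[OF assms])
  then show ?thesis
    by (simp add: partial_sum_Suc)
qed

lemma prism_coords_partial_sum:
  assumes nonneg: "\<And>l. 0 \<le> t l"
  shows "prism_coords t (partial_sum t (Suc k)) = simplical_face (Suc k) t"
proof (rule prism_coords_eq_face)
  fix j
  have "partial_sum t (j - 1) \<le> partial_sum t j"
    by (rule partial_sum_mono[OF nonneg]) simp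
  moreover have "j \<le> Suc k \<Longrightarrow> partial_sum t j \<le> partial_sum t (Suc k)"
    "\<not> j \<le> Suc k \<Longrightarrow> partial_sum t (Suc k) \<le> partial_sum t (j - 1)"
    by (auto intro: partial_sum_mono[OF nonneg])
  ultimately show "prism_cumul t (partial_sum t (Suc k)) j =
      (if j \<le> Suc k then partial_sum t j else partial_sum t (j - 1))"
    by (auto simp: prism_cumul_def)
qed

lemma prism_coords_zero:
  assumes nonneg: "\<And>l. 0 \<le> t l"
  shows "prism_coords t 0 = simplical_face 0 t"
proof (rule prism_coords_eq_face)
  fix j
  show "prism_cumul t 0 j = (if j \<le> 0 then partial_sum t j else partial_sum t (j - 1))"
    using partial_sum_nonneg[of t j, OF nonneg] partial_sum_nonneg[of t "j - 1", OF nonneg]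
    by (auto simp: prism_cumul_def)
qed

lemma partial_sum_simplical_face:
  "partial_sum (simplical_face i t) j = (if j \<le> i then partial_sum t j else partial_sum t (j - 1))"
proof (induction j)
  case (Suc j)
  then show ?case
    by (cases j i rule: linorder_cases; cases j) (auto simp: partial_sum_Suc simplical_face_def)
qed simp

lemma prism_cell_simplical_face:
  "prism_cell t c k \<Longrightarrow> prism_cell (simplical_face i t) c (if k < i then k else Suc k)"
  unfolding prism_cell_def partial_sum_simplical_face by auto

lemma prism_cumul_simplical_face:
  assumes nonneg: "\<And>l. 0 \<le> t l" and cell: "prism_cell t c k"
  shows "prism_cumul (simplical_face i t) c j =
    (if j \<le> (if k < i then Suc i else i) then prism_cumul t c j else prism_cumul t c (j - 1))"
proof -
  have mono: "\<And>x y. x \<le> y \<Longrightarrow> partial_sum t x \<le> partial_sum t y"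
    by (rule partial_sum_mono[OF nonneg])
  consider "j \<le> i" | "j = Suc i" | "Suc i < j"
    by linarith
  then show ?thesis
  proof cases
    case 2
    have "k < i \<Longrightarrow> c \<le> partial_sum t i" "\<not> k < i \<Longrightarrow> partial_sum t i \<le> c"
      using cell mono[of "Suc k" i] mono[of i k] by (auto simp: prism_cell_def)
    moreover have "partial_sum t (i - 1) \<le> partial_sum t i"
      by (rule mono) simp
    ultimately show ?thesis
      using 2 by (auto simp: prism_cumul_def partial_sum_simplical_face)
  qed (auto simp: prism_cumul_def partial_sum_simplical_face)
qed

lemma prism_coords_simplical_face:
  assumes "\<And>l. 0 \<le> t l" and "prism_cell t c k"
  shows "prism_coords (simplical_face i t) c = simplical_face (if k < i then Suc i else i) (prism_coords t c)"
  unfolding prism_coords_def[abs_def]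
  by (rule differences_simplical_face) (rule prism_cumul_simplical_face[OF assms])

lemma continuous_map_partial_sum:
  "continuous_map (prod_topology Z (subtopology (powertop_real UNIV) A)) euclideanreal
     (\<lambda>x. partial_sum (snd x) j)"
proof -
  have "continuous_map (prod_topology Z (subtopology (powertop_real UNIV) A)) euclideanreal (\<lambda>x. snd x l)" for l
  proof -
    have "continuous_map (subtopology (powertop_real UNIV) A) euclideanreal (\<lambda>t. t l)"
      by (rule continuous_map_from_subtopology) (rule continuous_map_product_projection, simp)
    from continuous_map_compose[OF continuous_map_snd this] show ?thesis
      by (simp add: o_def)
  qed
  then show ?thesis
    unfolding partial_sum_def by (intro continuous_map_sum) auto
qed

lemma continuous_map_prism_coords:
  "continuous_map (prod_topology (top_of_set {0..1}) (simplex_topology n))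
     (simplex_topology (Suc n)) (\<lambda>x. prism_coords (snd x) (1 - fst x))"
  unfolding continuous_map_in_subtopology
proof
  have "continuous_map (prod_topology (top_of_set {0..1}) (simplex_topology n))
     euclideanreal fst"
    using continuous_map_fst continuous_map_in_subtopology by blast
  then show "continuous_map (prod_topology (top_of_set {0..1}) (simplex_topology n))
     (powertop_real UNIV) (\<lambda>x. prism_coords (snd x) (1 - fst x))"
    unfolding continuous_map_componentwise_UNIV prism_coords_def prism_cumul_def
    by (intro allI continuous_map_diff continuous_map_real_max continuous_map_real_min
        continuous_map_partial_sum continuous_map_const[THEN iffD2]) simp_all
qed (auto intro: prism_coords_in_standard_simplex)

definition prism_index :: "(nat \<Rightarrow> real) \<Rightarrow> real \<Rightarrow> nat \<Rightarrow> nat" where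
  "prism_index t c n = (SOME k. k \<le> n \<and> prism_cell t c k)"

lemma prism_index_cell:
  assumes "t \<in> standard_simplex n" "0 \<le> c" "c \<le> 1"
  shows "prism_index t c n \<le> n \<and> prism_cell t c (prism_index t c n)"
  unfolding prism_index_def using prism_cell_exists[OF assms] by (rule someI_ex)

section \<open>Faces of prism simplices in the nerve\<close>

lemma nerve_face_append_left:
  assumes "length L = N" "0 < j" "j \<le> N" "M = length ys + N"
  shows "nerve_face m M (length ys + j) (ys @ L) = ys @ nerve_face m N j L"
proof (cases "j = N")
  case True
  have "L \<noteq> []"
    using assms by auto
  then show ?thesis
    using True assms by (simp add: nerve_face_def butlast_append)
next
  case False
  obtain j' where j: "j = Suc j'"
    using assms(2) by (cases j) auto
  show ?thesis
    using False assms by (simp add: j nerve_face_inner nth_append)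
qed

lemma nerve_face_append_right:
  assumes "length L = N" "j < N" "M = N + length zs"
  shows "nerve_face m M j (L @ zs) = nerve_face m N j L @ zs"
proof (cases "j = 0")
  case True
  then show ?thesis
    using assms by (cases L) (simp_all add: nerve_face_def)
next
  case False
  moreover have "j - 1 < N"
    using assms by simp
  ultimately show ?thesis
    using assms by (simp add: nerve_face_inner nth_append)
qed

lemma nerve_face_merge:
  "M = length ys + length zs + 2 \<Longrightarrow> nerve_face m M (Suc (length ys)) (ys @ a # b # zs) = ys @ m a b # zs"
  by (simp add: nerve_face_inner nth_append)

definition prism_list :: "'a \<Rightarrow> ('a \<Rightarrow> 'a) \<Rightarrow> ('a \<Rightarrow> 'a) \<Rightarrow> nat \<Rightarrow> 'a list \<Rightarrow> 'a list" where
  "prism_list e f g k xs = map f (take k xs) @ e # map g (drop k xs)"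

lemma prism_list_in_nerve_simplices:
  assumes "xs \<in> nerve_simplices S n" "k \<le> n" "e \<in> S" "\<And>x. x \<in> S \<Longrightarrow> f x \<in> S" "\<And>x. x \<in> S \<Longrightarrow> g x \<in> S"
  shows "prism_list e f g k xs \<in> nerve_simplices S (Suc n)"
  using assms by (auto simp: prism_list_def nerve_simplices_iff dest: in_set_takeD in_set_dropD)

lemma nerve_face_prism_list_last:
  "length xs = n \<Longrightarrow> nerve_face m (Suc n) (Suc n) (prism_list e f g n xs) = map f xs"
  by (simp add: nerve_face_def prism_list_def)

lemma nerve_face_prism_list_first: "nerve_face m (Suc n) 0 (prism_list e f g 0 xs) = map g xs"
  by (simp add: nerve_face_def prism_list_def)

lemma nerve_face_prism_list_adjacent:
  assumes len: "length xs = n" and k: "k < n" and natural: "m (f (xs ! k)) e = m e (g (xs ! k))"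
  shows "nerve_face m (Suc n) (Suc k) (prism_list e f g k xs) =
         nerve_face m (Suc n) (Suc k) (prism_list e f g (Suc k) xs)"
proof -
  let ?ys = "map f (take k xs)" and ?zs = "map g (drop (Suc k) xs)"
  have lens: "length ?ys = k" "Suc n = length ?ys + length ?zs + 2"
    using len k by auto
  have "prism_list e f g k xs = ?ys @ e # g (xs ! k) # ?zs"
    using len k by (simp add: prism_list_def Cons_nth_drop_Suc[symmetric])
  moreover have "prism_list e f g (Suc k) xs = ?ys @ f (xs ! k) # e # ?zs"
    using len k by (simp add: prism_list_def take_Suc_conv_app_nth)
  ultimately show ?thesis
    using nerve_face_merge[OF lens(2), of m] lens(1) natural by simp
qed

lemma nerve_face_prism_list_after:
  assumes g: "hom_on S m g" and xs: "xs \<in> nerve_simplices S (Suc n)" and ki: "k < i" and i: "i \<le> Suc n"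
  shows "nerve_face m (Suc (Suc n)) (Suc i) (prism_list e f g k xs) =
         prism_list e f g k (nerve_face m (Suc n) i xs)"
proof -
  let ?ys = "take k xs" and ?zs = "drop k xs"
  have len: "length ?ys = k" "length ?zs = Suc (n - k)"
    using xs ki i by (auto simp: nerve_simplices_iff)
  have zs: "?zs \<in> nerve_simplices S (Suc (n - k))"
    using xs len(2) by (auto simp: nerve_simplices_iff dest: in_set_dropD)
  have "nerve_face m (Suc n) i xs = ?ys @ nerve_face m (Suc (n - k)) (i - k) ?zs"
    using nerve_face_append_left[OF len(2), of "i - k" "Suc n" ?ys m] len(1) ki i by simp
  moreover have "nerve_face m (Suc (Suc n)) (Suc i) ((map f ?ys @ [e]) @ map g ?zs) =
      (map f ?ys @ [e]) @ nerve_face m (Suc (n - k)) (i - k) (map g ?zs)"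
    using nerve_face_append_left[of "map g ?zs" "Suc (n - k)" "i - k" "Suc (Suc n)" "map f ?ys @ [e]" m]
      len ki i by simp
  moreover have "length (nerve_face m (Suc (n - k)) (i - k) ?zs) = n - k"
    using len(2) ki i by (simp add: length_nerve_face)
  ultimately show ?thesis
    using map_nerve_face[OF g zs, of "i - k"] len(1) ki i by (simp add: prism_list_def)
qed

lemma nerve_face_prism_list_before:
  assumes f: "hom_on S m f" and xs: "xs \<in> nerve_simplices S (Suc n)" and ik: "i \<le> k" and k: "k \<le> n"
  shows "nerve_face m (Suc (Suc n)) i (prism_list e f g (Suc k) xs) =
         prism_list e f g k (nerve_face m (Suc n) i xs)"
proof -
  let ?ys = "take (Suc k) xs" and ?zs = "drop (Suc k) xs"
  have len: "length ?ys = Suc k" "length ?zs = n - k"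
    using xs k by (auto simp: nerve_simplices_iff)
  have ys: "?ys \<in> nerve_simplices S (Suc k)"
    using xs len(1) by (auto simp: nerve_simplices_iff dest: in_set_takeD)
  have "nerve_face m (Suc n) i (?ys @ ?zs) = nerve_face m (Suc k) i ?ys @ ?zs"
    by (rule nerve_face_append_right) (use len ik k in auto)
  moreover have "nerve_face m (Suc (Suc n)) i (map f ?ys @ e # map g ?zs) =
      nerve_face m (Suc k) i (map f ?ys) @ e # map g ?zs"
    by (rule nerve_face_append_right) (use len ik k in auto)
  moreover have "length (nerve_face m (Suc k) i ?ys) = k"
    using len(1) ik by (simp add: length_nerve_face)
  ultimately show ?thesis
    using map_nerve_face[OF f ys, of i] ik by (simp add: prism_list_def)
qed

section \<open>Intertwined homomorphisms induce homotopic maps\<close>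

locale intertwining =
  fixes S :: "'a set" and m :: "'a \<Rightarrow> 'a \<Rightarrow> 'a" and e :: 'a and f g :: "'a \<Rightarrow> 'a"
  assumes semigroup: "semigroup_on S m" and e_in: "e \<in> S"
    and f_in: "\<And>x. x \<in> S \<Longrightarrow> f x \<in> S" and g_in: "\<And>x. x \<in> S \<Longrightarrow> g x \<in> S"
    and f_hom: "hom_on S m f" and g_hom: "hom_on S m g"
    and intertwines: "\<And>a. a \<in> S \<Longrightarrow> m (f a) e = m e (g a)"
begin

lemma prism_list_in: "xs \<in> nerve_simplices S n \<Longrightarrow> k \<le> n \<Longrightarrow> prism_list e f g k xs \<in> nerve_simplices S (Suc n)"
  by (rule prism_list_in_nerve_simplices) (auto intro: e_in f_in g_in)

lemma nerve_class_prism_adjacent: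
  assumes xs: "xs \<in> nerve_simplices S n" and t: "t \<in> standard_simplex n" and k: "Suc k \<le> n"
    and cells: "prism_cell t c k" "prism_cell t c (Suc k)"
  shows "nerve_class S m ((Suc n, prism_list e f g k xs), prism_coords t c) =
         nerve_class S m ((Suc n, prism_list e f g (Suc k) xs), prism_coords t c)"
proof -
  have "c = partial_sum t (Suc k)"
    using cells by (simp add: prism_cell_def)
  then have coords: "prism_coords t c = simplical_face (Suc k) t"
    using prism_coords_partial_sum standard_simplex_nonneg[OF t] by blast
  have "xs ! k \<in> S"
    using xs k by (auto simp: nerve_simplices_iff)
  then have "nerve_face m (Suc n) (Suc k) (prism_list e f g k xs) =
             nerve_face m (Suc n) (Suc k) (prism_list e f g (Suc k) xs)"
    using xs k by (intro nerve_face_prism_list_adjacent intertwines) (auto simp: nerve_simplices_iff)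
  then show ?thesis
    unfolding coords using nerve_class_face[OF prism_list_in[OF xs] _ t] k by (metis Suc_leD le_SucI)
qed

lemma nerve_class_prism_independent:
  assumes xs: "xs \<in> nerve_simplices S n" and t: "t \<in> standard_simplex n"
    and k: "k \<le> n" "prism_cell t c k" and l: "l \<le> n" "prism_cell t c l"
  shows "nerve_class S m ((Suc n, prism_list e f g k xs), prism_coords t c) =
         nerve_class S m ((Suc n, prism_list e f g l xs), prism_coords t c)"
proof -
  have mono: "\<And>i j. i \<le> j \<Longrightarrow> partial_sum t i \<le> partial_sum t j"
    by (rule partial_sum_mono[OF standard_simplex_nonneg[OF t]])
  have "nerve_class S m ((Suc n, prism_list e f g i xs), prism_coords t c) =
        nerve_class S m ((Suc n, prism_list e f g j xs), prism_coords t c)"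
    if "i \<le> j" "j \<le> n" "prism_cell t c i" "prism_cell t c j" for i j
    using that
  proof (induction j rule: dec_induct)
    case (step j)
    have "prism_cell t c j"
      using step.prems mono[of "Suc i" "Suc j"] mono[of j "Suc j"] step.hyps
      by (auto simp: prism_cell_def)
    with step show ?case
      using nerve_class_prism_adjacent[OF xs t] by simp
  qed simp
  then show ?thesis
    using k l by (metis nat_le_linear)
qed

text \<open>Time \<open>s\<close> uses the slice \<open>c = 1 - s\<close> of the prism, so that the homotopy starts at
  \<open>B f\<close> (last face) and ends at \<open>B g\<close> (\<open>0\<close>-th face). The cell picked by \<open>prism_index\<close> is
  arbitrary only on cell boundaries, where \<open>nerve_class_prism_independent\<close> applies.\<close>

definition prism_homotopy :: "real \<times> (nat \<times> 'a list) \<times> (nat \<Rightarrow> real) \<Rightarrow> _" where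
  "prism_homotopy = (\<lambda>(s, ((n, xs), t)).
     nerve_class S m ((Suc n, prism_list e f g (prism_index t (1 - s) n) xs), prism_coords t (1 - s)))"

lemma prism_homotopy_eq:
  assumes xs: "xs \<in> nerve_simplices S n" and t: "t \<in> standard_simplex n" and s: "0 \<le> s" "s \<le> 1"
    and k: "k \<le> n" "prism_cell t (1 - s) k"
  shows "prism_homotopy (s, ((n, xs), t)) =
    nerve_class S m ((Suc n, prism_list e f g k xs), prism_coords t (1 - s))"
proof -
  have "prism_index t (1 - s) n \<le> n \<and> prism_cell t (1 - s) (prism_index t (1 - s) n)"
    using prism_index_cell[OF t] s by simp
  then show ?thesis
    using nerve_class_prism_independent[OF xs t _ _ k] by (simp add: prism_homotopy_def)
qed

lemma prism_homotopy_respects: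
  assumes s: "0 \<le> s" "s \<le> 1" and ab: "(a, b) \<in> realization_rel (nerve_simplices S) (nerve_face m)"
  shows "prism_homotopy (s, a) = prism_homotopy (s, b)"
proof -
  obtain n i xs t where ab': "a = ((n, nerve_face m (Suc n) i xs), t)" "b = ((Suc n, xs), simplical_face i t)"
    and xs: "xs \<in> nerve_simplices S (Suc n)" and i: "i \<le> Suc n" and t: "t \<in> standard_simplex n"
    using ab unfolding realization_rel_def by blast
  obtain k where k: "k \<le> n" "prism_cell t (1 - s) k"
    using prism_cell_exists[of t n "1 - s"] t s by auto
  define k' where "k' = (if k < i then k else Suc k)"
  define j where "j = (if k < i then Suc i else i)"
  have t': "simplical_face i t \<in> standard_simplex (Suc n)"
    using simplical_face_in_standard_simplex[of "Suc n" i t] i t by simp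
  have cell': "prism_cell (simplical_face i t) (1 - s) k'"
    unfolding k'_def by (rule prism_cell_simplical_face[OF k(2)])
  have "prism_homotopy (s, b) = nerve_class S m ((Suc (Suc n), prism_list e f g k' xs),
      prism_coords (simplical_face i t) (1 - s))"
    unfolding ab' by (rule prism_homotopy_eq[OF xs t' s _ cell']) (use k in \<open>simp add: k'_def\<close>)
  also have "prism_coords (simplical_face i t) (1 - s) = simplical_face j (prism_coords t (1 - s))"
    unfolding j_def by (rule prism_coords_simplical_face[OF standard_simplex_nonneg[OF t] k(2)])
  also have "nerve_class S m ((Suc (Suc n), prism_list e f g k' xs), \<dots>) =
      nerve_class S m ((Suc n, nerve_face m (Suc (Suc n)) j (prism_list e f g k' xs)), prism_coords t (1 - s))"
    using k i s unfolding j_def k'_def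
    by (intro nerve_class_face[symmetric] prism_list_in[OF xs] prism_coords_in_standard_simplex[OF t]) auto
  also have "nerve_face m (Suc (Suc n)) j (prism_list e f g k' xs) = prism_list e f g k (nerve_face m (Suc n) i xs)"
    using k i unfolding j_def k'_def
    by (auto intro: nerve_face_prism_list_after[OF g_hom xs] nerve_face_prism_list_before[OF f_hom xs])
  also have "nerve_class S m ((Suc n, \<dots>), prism_coords t (1 - s)) = prism_homotopy (s, a)"
    unfolding ab' using k s
    by (intro prism_homotopy_eq[symmetric] nerve_face_in_nerve_simplices[OF semigroup xs i] t) auto
  finally show ?thesis ..
qed

lemma continuous_map_prism_homotopy_simplex:
  assumes xs: "xs \<in> nerve_simplices S n"
  shows "continuous_map (prod_topology (top_of_set {0..1}) (simplex_topology n))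
     (classifying_space S m) (\<lambda>(s, t). prism_homotopy (s, ((n, xs), t)))"
    (is "continuous_map ?X _ _")
proof -
  let ?cell = "\<lambda>k. {x \<in> topspace ?X. prism_cell (snd x) (1 - fst x) k}"
  let ?piece = "\<lambda>k x. nerve_class S m ((Suc n, prism_list e f g k xs), prism_coords (snd x) (1 - fst x))"
  show ?thesis
  proof (rule pasting_lemma_closed[where I = "{..n}" and T = ?cell and f = ?piece])
    show "continuous_map (subtopology ?X (?cell k)) (classifying_space S m) (?piece k)" if "k \<in> {..n}" for k
    proof (rule continuous_map_from_subtopology)
      have "k \<le> n"
        using that by simp
      from continuous_map_compose[OF continuous_map_prism_coords
          continuous_map_nerve_class_simplex[OF prism_list_in[OF xs this]]]
      show "continuous_map ?X (classifying_space S m) (?piece k)"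
        by (simp add: o_def)
    qed
    show "closedin ?X (?cell k)" for k
    proof -
      have "continuous_map ?X euclideanreal fst"
        using continuous_map_fst continuous_map_in_subtopology by blast
      then have c: "continuous_map ?X euclideanreal (\<lambda>x. 1 - fst x)"
        by (intro continuous_map_diff continuous_map_const[THEN iffD2]) simp_all
      have "?cell k = {x \<in> topspace ?X. partial_sum (snd x) k \<le> 1 - fst x} \<inter>
          {x \<in> topspace ?X. 1 - fst x \<le> partial_sum (snd x) (Suc k)}"
        by (auto simp: prism_cell_def)
      then show ?thesis
        using closedin_Int[OF closedin_continuous_maps_le[OF continuous_map_partial_sum c]
            closedin_continuous_maps_le[OF c continuous_map_partial_sum]] by simp
    qed
    show "?piece i x = ?piece j x" if "i \<in> {..n}" "j \<in> {..n}" "x \<in> topspace ?X \<inter> ?cell i \<inter> ?cell j" for i j x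
      using that nerve_class_prism_independent[OF xs, of "snd x" i "1 - fst x" j] by (auto simp: mem_Times_iff)
    show "\<exists>k. k \<in> {..n} \<and> x \<in> ?cell k \<and> (\<lambda>(s, t). prism_homotopy (s, ((n, xs), t))) x = ?piece k x"
      if x: "x \<in> topspace ?X" for x
    proof -
      obtain s t where st: "x = (s, t)" "0 \<le> s" "s \<le> 1" "t \<in> standard_simplex n"
        using x by auto
      then obtain k where k: "k \<le> n" "prism_cell t (1 - s) k"
        using prism_cell_exists[of t n "1 - s"] by auto
      then have "prism_homotopy (s, ((n, xs), t)) = ?piece k x"
        using prism_homotopy_eq[OF xs st(4,2,3) k] st(1) by simp
      then show ?thesis
        using k x st(1) by auto
    qed
  qed simp
qed

lemma continuous_map_prism_homotopy:
  "continuous_map (prod_topology (top_of_set {0..1}) (simplices_sum (nerve_simplices S)))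
     (classifying_space S m) prism_homotopy"
  by (rule continuous_map_from_prod_simplices_sum) (rule continuous_map_prism_homotopy_simplex)

lemma prism_homotopy_0:
  assumes xs: "xs \<in> nerve_simplices S n" and t: "t \<in> standard_simplex n"
  shows "prism_homotopy (0, ((n, xs), t)) = nerve_class S m ((n, map f xs), t)"
proof -
  have "prism_cell t (1 - 0) n"
    using partial_sum_le_one[OF t] partial_sum_standard_simplex[OF t] by (simp add: prism_cell_def)
  then have "prism_homotopy (0, ((n, xs), t)) =
      nerve_class S m ((Suc n, prism_list e f g n xs), simplical_face (Suc n) t)"
    using prism_homotopy_eq[OF xs t, of 0 n] prism_coords_partial_sum[of t n, OF standard_simplex_nonneg[OF t]]
      partial_sum_standard_simplex[OF t] by simp
  also have "\<dots> = nerve_class S m ((n, nerve_face m (Suc n) (Suc n) (prism_list e f g n xs)), t)"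
    by (rule nerve_class_face[symmetric]) (use prism_list_in[OF xs] t in auto)
  also have "nerve_face m (Suc n) (Suc n) (prism_list e f g n xs) = map f xs"
    using xs by (simp add: nerve_face_prism_list_last nerve_simplices_iff)
  finally show ?thesis .
qed

lemma prism_homotopy_1:
  assumes xs: "xs \<in> nerve_simplices S n" and t: "t \<in> standard_simplex n"
  shows "prism_homotopy (1, ((n, xs), t)) = nerve_class S m ((n, map g xs), t)"
proof -
  have "prism_cell t (1 - 1) 0"
    using standard_simplex_nonneg[OF t] by (simp add: prism_cell_def partial_sum_Suc)
  then have "prism_homotopy (1, ((n, xs), t)) =
      nerve_class S m ((Suc n, prism_list e f g 0 xs), simplical_face 0 t)"
    using prism_homotopy_eq[OF xs t, of 1 0] prism_coords_zero[of t, OF standard_simplex_nonneg[OF t]] by simp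
  also have "\<dots> = nerve_class S m ((n, nerve_face m (Suc n) 0 (prism_list e f g 0 xs)), t)"
    by (rule nerve_class_face[symmetric]) (use prism_list_in[OF xs] t in auto)
  also have "nerve_face m (Suc n) 0 (prism_list e f g 0 xs) = map g xs"
    by (rule nerve_face_prism_list_first)
  finally show ?thesis .
qed

lemma classifying_space_maps_homotopic:
  assumes F: "\<And>n xs t. xs \<in> nerve_simplices S n \<Longrightarrow> t \<in> standard_simplex n \<Longrightarrow>
      F (nerve_class S m ((n, xs), t)) = nerve_class S m ((n, map f xs), t)"
    and G: "\<And>n xs t. xs \<in> nerve_simplices S n \<Longrightarrow> t \<in> standard_simplex n \<Longrightarrow>
      G (nerve_class S m ((n, xs), t)) = nerve_class S m ((n, map g xs), t)"
  shows "homotopic_with (\<lambda>x. True) (classifying_space S m) (classifying_space S m) F G"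
proof -
  have "quotient_map (prod_topology (top_of_set {0..1::real}) (simplices_sum (nerve_simplices S)))
      (prod_topology (top_of_set {0..1::real}) (classifying_space S m)) (\<lambda>(s, p). (s, nerve_class S m p))"
    unfolding classifying_space_def
    by (intro quotient_map_prod_right quotient_map_realization_class compact_imp_locally_compact_space)
      (auto intro: Hausdorff_space_subtopology simp: compact_space_subtopology)
  then obtain H where H: "continuous_map (prod_topology (top_of_set {0..1::real}) (classifying_space S m))
      (classifying_space S m) H"
    and H_class: "\<And>x. x \<in> topspace (prod_topology (top_of_set {0..1::real}) (simplices_sum (nerve_simplices S))) \<Longrightarrow>
      H ((\<lambda>(s, p). (s, nerve_class S m p)) x) = prism_homotopy x"
  proof (rule quotient_map_lift_exists[OF _ continuous_map_prism_homotopy])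
    fix x y
    assume "x \<in> topspace (prod_topology (top_of_set {0..1::real}) (simplices_sum (nerve_simplices S)))"
      and "(\<lambda>(s, p). (s, nerve_class S m p)) x = (\<lambda>(s, p). (s, nerve_class S m p)) y"
    then obtain s p q where "x = (s, p)" "y = (s, q)" "0 \<le> s" "s \<le> 1" "nerve_class S m p = nerve_class S m q"
      by (cases x; cases y) auto
    then show "prism_homotopy x = prism_homotopy y"
      using realization_class_eq_respects[of _ _ "\<lambda>p. prism_homotopy (s, p)"] prism_homotopy_respects
      by blast
  qed blast
  have "H (0, x) = F x \<and> H (1, x) = G x" if x: "x \<in> topspace (classifying_space S m)" for x
  proof -
    obtain n xs t where x: "x = nerve_class S m ((n, xs), t)" "xs \<in> nerve_simplices S n" "t \<in> standard_simplex n"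
      using x by (auto simp: topspace_classifying_space topspace_simplices_sum)
    then show ?thesis
      using H_class[of "(0, (n, xs), t)"] H_class[of "(1, (n, xs), t)"] F G prism_homotopy_0 prism_homotopy_1
      by (auto simp: topspace_simplices_sum)
  qed
  then show ?thesis
    using H by (subst homotopic_with) auto
qed

end

section \<open>Retractions onto corners\<close>

lemma homotopy_equivalent_classifying_space_retract:
  assumes S: "semigroup_on S m" and h: "hom_on S m h" and hS: "h ` S = T" and TS: "T \<subseteq> S"
    and id_T: "\<And>y. y \<in> T \<Longrightarrow> h y = y" and e: "e \<in> S"
    and natural: "(\<forall>a\<in>S. m a e = m e (h a)) \<or> (\<forall>a\<in>S. m (h a) e = m e a)"
  shows "classifying_space S m homotopy_equivalent_space classifying_space T m"
proof -
  have hT: "\<And>x. x \<in> S \<Longrightarrow> h x \<in> T"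
    using hS by blast
  obtain F where F: "continuous_map (classifying_space S m) (classifying_space T m) F"
    and F_class: "\<And>n xs t. xs \<in> nerve_simplices S n \<Longrightarrow> t \<in> standard_simplex n \<Longrightarrow>
      F (nerve_class S m ((n, xs), t)) = nerve_class T m ((n, map h xs), t)"
    using classifying_space_map_exists[OF h hT] by metis
  obtain G where G: "continuous_map (classifying_space T m) (classifying_space S m) G"
    and G_class: "\<And>n xs t. xs \<in> nerve_simplices T n \<Longrightarrow> t \<in> standard_simplex n \<Longrightarrow>
      G (nerve_class T m ((n, xs), t)) = nerve_class S m ((n, map id xs), t)"
    using classifying_space_map_exists[of T m id S] TS by (metis hom_on_id subsetD id_apply)
  have GF: "(G \<circ> F) (nerve_class S m ((n, xs), t)) = nerve_class S m ((n, map h xs), t)"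
    if xs: "xs \<in> nerve_simplices S n" and t: "t \<in> standard_simplex n" for n xs t
  proof -
    have "map h xs \<in> nerve_simplices T n"
      using map_in_nerve_simplices[of S h T, OF hT xs] .
    then show ?thesis
      using F_class[OF xs t] G_class[OF _ t] by simp
  qed
  have id_class: "id (nerve_class S m ((n, xs), t)) = nerve_class S m ((n, map id xs), t)" for n xs t
    by simp
  have "homotopic_with (\<lambda>x. True) (classifying_space S m) (classifying_space S m) id (G \<circ> F)"
    using natural
  proof
    assume "\<forall>a\<in>S. m a e = m e (h a)"
    then interpret intertwining S m e id h
      by unfold_locales (use S e h hT TS in auto)
    show ?thesis
      by (rule classifying_space_maps_homotopic[OF id_class GF])
  next
    assume "\<forall>a\<in>S. m (h a) e = m e a"
    then interpret intertwining S m e h id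
      by unfold_locales (use S e h hT TS in auto)
    show ?thesis
      by (rule homotopic_with_symD[OF classifying_space_maps_homotopic[OF GF id_class]])
  qed
  moreover have "homotopic_with (\<lambda>x. True) (classifying_space T m) (classifying_space T m) (F \<circ> G) id"
  proof (rule homotopic_with_equal)
    show "continuous_map (classifying_space T m) (classifying_space T m) (F \<circ> G)"
      using F G by (rule continuous_map_compose[rotated])
    fix x assume "x \<in> topspace (classifying_space T m)"
    then obtain n xs t where x: "x = nerve_class T m ((n, xs), t)"
      and xs: "xs \<in> nerve_simplices T n" and t: "t \<in> standard_simplex n"
      by (auto simp: topspace_classifying_space topspace_simplices_sum)
    have xsS: "xs \<in> nerve_simplices S n"
      using xs TS by (auto simp: nerve_simplices_iff)
    have "map h xs = xs"
      using xs id_T by (auto simp: nerve_simplices_iff intro: map_idI)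
    then show "(F \<circ> G) x = id x"
      using G_class[OF xs t] F_class[OF xsS t] x by simp
  qed simp_all
  ultimately show ?thesis
    unfolding homotopy_equivalent_space_def
    using F G homotopic_with_symD by blast
qed

lemma idempotent_corner:
  assumes S: "semigroup_on S m" and e: "e \<in> S" and ee: "m e e = e" and y: "y \<in> {m (m e x) e | x. x \<in> S}"
  shows "y \<in> S" "m e y = y" "m y e = y"
proof -
  obtain x where x: "x \<in> S" "y = m (m e x) e"
    using y by blast
  have ex: "m e x \<in> S"
    by (rule semigroup_on_closed[OF S e x(1)])
  show "y \<in> S"
    unfolding x(2) by (rule semigroup_on_closed[OF S ex e])
  show "m e y = y"
    unfolding x(2) using semigroup_on_assoc[OF S e ex e] semigroup_on_assoc[OF S e e x(1)] ee by simp
  show "m y e = y"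
    unfolding x(2) using semigroup_on_assoc[OF S ex e e] ee by simp
qed

lemma homotopy_equivalent_classifying_space_right_corner:
  assumes S: "semigroup_on S m" and e: "e \<in> S" and ee: "m e e = e"
    and corner: "{m (m e x) e | x. x \<in> S} = {m x e | x. x \<in> S}"
  shows "classifying_space S m homotopy_equivalent_space classifying_space {m (m e x) e | x. x \<in> S} m"
proof (rule homotopy_equivalent_classifying_space_retract[OF S _ _ _ _ e])
  let ?T = "{m (m e x) e | x. x \<in> S}"
  have eT: "m e y = y" and Te: "m y e = y" if "y \<in> ?T" for y
    using idempotent_corner[OF S e ee that] by simp_all
  have xe: "m x e \<in> ?T" if "x \<in> S" for x
    unfolding corner using that by blast
  show "hom_on S m (\<lambda>x. m x e)"
    unfolding hom_on_def
  proof (intro ballI)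
    fix x y assume x: "x \<in> S" and y: "y \<in> S"
    have "m (m x e) (m y e) = m x (m e (m y e))"
      using semigroup_on_assoc[OF S x e] semigroup_on_closed[OF S y e] by simp
    also have "\<dots> = m (m x y) e"
      using eT[OF xe[OF y]] semigroup_on_assoc[OF S x y e] by simp
    finally show "m (m x y) e = m (m x e) (m y e)" ..
  qed
  show "(\<lambda>x. m x e) ` S = ?T"
    unfolding corner by blast
  show "?T \<subseteq> S"
    using idempotent_corner(1)[OF S e ee] by blast
  show "\<And>y. y \<in> ?T \<Longrightarrow> m y e = y"
    by (rule Te)
  show "(\<forall>a\<in>S. m a e = m e (m a e)) \<or> (\<forall>a\<in>S. m (m a e) e = m e a)"
    using eT xe by simp
qed

lemma homotopy_equivalent_classifying_space_left_corner:
  assumes S: "semigroup_on S m" and e: "e \<in> S" and ee: "m e e = e"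
    and corner: "{m (m e x) e | x. x \<in> S} = {m e x | x. x \<in> S}"
  shows "classifying_space S m homotopy_equivalent_space classifying_space {m (m e x) e | x. x \<in> S} m"
proof (rule homotopy_equivalent_classifying_space_retract[OF S _ _ _ _ e])
  let ?T = "{m (m e x) e | x. x \<in> S}"
  have eT: "m e y = y" and Te: "m y e = y" if "y \<in> ?T" for y
    using idempotent_corner[OF S e ee that] by simp_all
  have ex: "m e x \<in> ?T" if "x \<in> S" for x
    unfolding corner using that by blast
  show "hom_on S m (\<lambda>x. m e x)"
    unfolding hom_on_def
  proof (intro ballI)
    fix x y assume x: "x \<in> S" and y: "y \<in> S"
    have "m (m e x) (m e y) = m (m (m e x) e) y"
      using semigroup_on_assoc[OF S semigroup_on_closed[OF S e x] e y] by simp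
    also have "\<dots> = m e (m x y)"
      using Te[OF ex[OF x]] semigroup_on_assoc[OF S e x y] by simp
    finally show "m e (m x y) = m (m e x) (m e y)" ..
  qed
  show "(\<lambda>x. m e x) ` S = ?T"
    unfolding corner by blast
  show "?T \<subseteq> S"
    using idempotent_corner(1)[OF S e ee] by blast
  show "\<And>y. y \<in> ?T \<Longrightarrow> m e y = y"
    by (rule eT)
  show "(\<forall>a\<in>S. m a e = m e (m e a)) \<or> (\<forall>a\<in>S. m (m e a) e = m e a)"
    using Te ex by simp
qed

theorem lemma7p4:
  fixes S :: "'a set" and m :: "'a \<Rightarrow> 'a \<Rightarrow> 'a" and e :: 'a
  assumes "semigroup_on S m"
    and "e \<in> S" and "m e e = e"
    and "{m (m e x) e | x. x \<in> S} = {m x e | x. x \<in> S} \<or>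
         {m (m e x) e | x. x \<in> S} = {m e x | x. x \<in> S}"
  shows "classifying_space S m homotopy_equivalent_space
         classifying_space {m (m e x) e | x. x \<in> S} m"
  using assms(4) homotopy_equivalent_classifying_space_right_corner[OF assms(1-3)]
    homotopy_equivalent_classifying_space_left_corner[OF assms(1-3)] by blast

end
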